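(* Let $p$ be a prime such that $2^p-1$ is a (Mersenne) prime. Then $2^{p-1}(2^p-1)$ is the only even perfect number which is $3(2p-1)$-$T_0T^\ast$-perfect.
   Context: A perfect number is a positive integer $N$ with $\sigma(N)=2N$. For a positive integer $m$, $T(m)$ denotes the product of all positive divisors of $m$, and $T^\ast(m)$ the product of all unitary divisors of $m$ (divisors $d$ with $\gcd(d,m/d)=1$). For an integer $K\ge 2$, an integer $n>1$ is called $K$-$T_0T^\ast$-perfect if $T(T^\ast(n))=n^K$. *)

theory Defs
  imports "HOL-Computational_Algebra.Primes"
begin

definition sigma :: "nat \<Rightarrow> nat" where
  "sigma n = (\<Sum>d\<in>{d. d dvd n}. d)"

definition perfect :: "nat \<Rightarrow> bool" where
  "perfect N \<longleftrightarrow> N > 0 \<and> sigma N = 2 * N"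

text \<open>T(m): product of all positive divisors of m.\<close>
definition divisor_prod :: "nat \<Rightarrow> nat" where
  "divisor_prod m = (\<Prod>d\<in>{d. d dvd m}. d)"

text \<open>T*(m): product of all unitary divisors of m.\<close>
definition unitary_divisor_prod :: "nat \<Rightarrow> nat" where
  "unitary_divisor_prod m = (\<Prod>d\<in>{d. d dvd m \<and> coprime d (m div d)}. d)"

definition K_T0Tstar_perfect :: "nat \<Rightarrow> nat \<Rightarrow> bool" where
  "K_T0Tstar_perfect K n \<longleftrightarrow> K \<ge> 2 \<and> n > 1 \<and>
     divisor_prod (unitary_divisor_prod n) = n ^ K"

end

theory Submission
  imports Defs
begin

text \<open>
  By the Euclid--Euler theorem the even perfect numbers are the numbers \<open>2^(q-1) * (2^q - 1)\<close>
  with \<open>2^q - 1\<close> prime. For \<open>N = p^k * r\<close> with distinct primes \<open>p, r\<close> and \<open>k \<ge> 1\<close> the unitary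
  divisors are \<open>1, p^k, r, N\<close>, so \<open>T*(N) = N^2\<close>; this square has \<open>3(2k+1)\<close> divisors, and
  \<open>T(m)^2 = m^\<tau>(m)\<close> gives \<open>T(N^2) = N^(3(2k+1))\<close>. Hence the even perfect number belonging to \<open>q\<close>
  is \<open>K\<close>-\<open>T\<^sub>0T*\<close>-perfect exactly for \<open>K = 3(2q - 1)\<close>, which singles out \<open>q = p\<close>.
\<close>

lemma divisors_prime_power_mult:
  fixes p m :: nat
  assumes "prime p" "\<not> p dvd m"
  shows "{d. d dvd p ^ k * m} = (\<lambda>(i, d). p ^ i * d) ` ({..k} \<times> {d. d dvd m})"
proof (intro set_eqI iffI)
  fix x assume "x \<in> {d. d dvd p ^ k * m}"
  then obtain b c where "x = b * c" "b dvd p ^ k" "c dvd m"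
    using division_decomp by blast
  moreover from \<open>b dvd p ^ k\<close> obtain i where "i \<le> k" "b = p ^ i"
    using divides_primepow_nat[OF assms(1)] by auto
  ultimately show "x \<in> (\<lambda>(i, d). p ^ i * d) ` ({..k} \<times> {d. d dvd m})" by force
next
  fix x assume "x \<in> (\<lambda>(i, d). p ^ i * d) ` ({..k} \<times> {d. d dvd m})"
  then obtain i d where "x = p ^ i * d" "i \<le> k" "d dvd m" by auto
  then show "x \<in> {d. d dvd p ^ k * m}" by (simp add: le_imp_power_dvd mult_dvd_mono)
qed

lemma inj_on_prime_power_mult:
  fixes p m :: nat
  assumes "prime p" "\<not> p dvd m"
  shows "inj_on (\<lambda>(i, d). p ^ i * d) ({..k} \<times> {d. d dvd m})"
proof (rule inj_onI, clarsimp)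
  fix i j d e :: nat
  assume "d dvd m" "e dvd m" and eq: "p ^ i * d = p ^ j * e"
  then have "\<not> p dvd d" "\<not> p dvd e" using assms(2) dvd_trans by blast+
  moreover have "p \<noteq> 0" using assms(1) by auto
  ultimately have "i = j" using eq multiplicity_decomposeI by metis
  with eq assms(1) show "i = j \<and> d = e" by simp
qed

lemma sigma_prime_power_mult:
  fixes p m :: nat
  assumes "prime p" "\<not> p dvd m"
  shows "sigma (p ^ k * m) = (\<Sum>i\<le>k. p ^ i) * sigma m"
proof -
  have "sigma (p ^ k * m) = (\<Sum>(i, d)\<in>{..k} \<times> {d. d dvd m}. p ^ i * d)"
    unfolding sigma_def divisors_prime_power_mult[OF assms]
    by (rule sum.reindex[OF inj_on_prime_power_mult[OF assms], unfolded comp_def])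
  also have "\<dots> = (\<Sum>i\<le>k. \<Sum>d\<in>{d. d dvd m}. p ^ i * d)"
    by (simp add: sum.cartesian_product)
  also have "\<dots> = (\<Sum>i\<le>k. p ^ i * sigma m)"
    by (simp add: sigma_def sum_distrib_left)
  also have "\<dots> = (\<Sum>i\<le>k. p ^ i) * sigma m"
    by (rule sum_distrib_right[symmetric])
  finally show ?thesis .
qed

lemma card_divisors_prime_power_mult:
  fixes p m :: nat
  assumes "prime p" "\<not> p dvd m"
  shows "card {d. d dvd p ^ k * m} = (k + 1) * card {d. d dvd m}"
  unfolding divisors_prime_power_mult[OF assms] card_image[OF inj_on_prime_power_mult[OF assms]]
  by (simp add: card_cartesian_product)

lemma sigma_pow2_mult_odd:
  fixes m :: nat
  assumes "odd m"
  shows "sigma (2 ^ k * m) = (2 ^ (k + 1) - 1) * sigma m"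
proof -
  have "(\<Sum>i\<le>k. (2::nat) ^ i) = 2 ^ (k + 1) - 1"
    using sum_power2[of "k + 1"] by (simp add: atLeast0LessThan lessThan_Suc_atMost)
  with sigma_prime_power_mult[of 2 m k] assms show ?thesis by simp
qed

lemma sigma_prime:
  fixes r :: nat
  assumes "prime r"
  shows "sigma r = r + 1"
proof -
  have "{d. d dvd r} = {1, r}" using assms by (auto simp: prime_nat_iff)
  with prime_gt_1_nat[OF assms] show ?thesis unfolding sigma_def by simp
qed

lemma sigma_ge_of_nontrivial_divisor:
  fixes m c :: nat
  assumes "m > 0" "c dvd m" "c \<noteq> 1" "c \<noteq> m"
  shows "1 + c + m \<le> sigma m"
proof -
  have "sum (\<lambda>d. d) {1, c, m} = 1 + c + m" using assms by auto
  moreover have "sum (\<lambda>d. d) {1, c, m} \<le> sum (\<lambda>d. d) {d. d dvd m}"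
    by (rule sum_mono2[OF finite_divisors_nat[OF assms(1)]]) (use assms in auto)
  ultimately show ?thesis unfolding sigma_def by simp
qed

lemma prime_if_sigma_eq_add_divisor:
  fixes m c :: nat
  assumes "c dvd m" "c < m" "sigma m = m + c"
  shows "c = 1 \<and> prime m"
proof -
  have "m > 0" using assms(2) by simp
  have c: "c = 1"
  proof (rule ccontr)
    assume "c \<noteq> 1"
    with assms \<open>m > 0\<close> have "1 + c + m \<le> sigma m"
      by (intro sigma_ge_of_nontrivial_divisor) auto
    with assms(3) show False by simp
  qed
  have "d = 1 \<or> d = m" if "d dvd m" for d
  proof (rule ccontr)
    assume "\<not> (d = 1 \<or> d = m)"
    with that \<open>m > 0\<close> have "1 + d + m \<le> sigma m"
      by (intro sigma_ge_of_nontrivial_divisor) auto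
    with assms(3) c that \<open>m > 0\<close> show False by (cases "d = 0") auto
  qed
  with c assms(2) show ?thesis by (simp add: prime_nat_iff)
qed

theorem even_perfect_imp_Euclid_form:
  fixes N :: nat
  assumes "even N" "perfect N"
  obtains q where "q \<ge> 2" "prime (2 ^ q - 1 :: nat)" "N = 2 ^ (q - 1) * (2 ^ q - 1)"
proof -
  have "N > 0" and sigma_N: "sigma N = 2 * N" using assms(2) unfolding perfect_def by auto
  have "N \<noteq> 0" "\<not> is_unit (2::nat)" using \<open>N > 0\<close> by auto
  then obtain k m where N: "N = 2 ^ k * m" and "odd m"
    using multiplicity_decompose' by metis
  have "k \<ge> 1" using assms(1) N \<open>odd m\<close> by (cases k) auto
  define A :: nat where "A = 2 ^ (k + 1)"
  have "A \<ge> 4" using power_increasing[of 2 "k + 1" "2::nat"] \<open>k \<ge> 1\<close> unfolding A_def by simp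
  have key: "(A - 1) * sigma m = A * m"
    using sigma_pow2_mult_odd[OF \<open>odd m\<close>, of k] sigma_N N unfolding A_def by simp
  have "coprime (A - 1) A"
    using \<open>A \<ge> 4\<close> coprime_Suc_right_nat[of "A - 1"] by simp
  moreover have "(A - 1) dvd A * m" using key by (metis dvd_triv_left)
  ultimately obtain c where m: "m = (A - 1) * c"
    by (auto simp: coprime_dvd_mult_right_iff)
  have "m > 0" using \<open>odd m\<close> by (cases m) auto
  then have "c > 0" using m by (cases c) auto
  have "sigma m = A * c" using key m \<open>A \<ge> 4\<close> by (simp add: mult.left_commute)
  also have "\<dots> = m + c" using m \<open>A \<ge> 4\<close> by (cases A) auto
  finally have "c = 1 \<and> prime m"
    using m \<open>c > 0\<close> \<open>A \<ge> 4\<close> by (intro prime_if_sigma_eq_add_divisor) auto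
  with m have "m = 2 ^ (k + 1) - 1" "prime m" unfolding A_def by auto
  with that[of "k + 1"] \<open>k \<ge> 1\<close> N show thesis by simp
qed

lemma Mersenne_prime_exponent_ge_2:
  assumes "prime (2 ^ q - 1 :: nat)"
  shows "q \<ge> 2"
proof (rule ccontr)
  assume "\<not> q \<ge> 2"
  then have "q = 0 \<or> q = 1" by auto
  with assms show False by auto
qed

theorem perfect_Euclid_number:
  assumes "prime (2 ^ q - 1 :: nat)"
  shows "perfect (2 ^ (q - 1) * (2 ^ q - 1))"
proof -
  have "q \<ge> 2" using Mersenne_prime_exponent_ge_2[OF assms] .
  then have q: "q - 1 + 1 = q" "(2::nat) ^ q = 2 * 2 ^ (q - 1)"
    by (auto simp flip: power_Suc)
  have "odd (2 ^ q - 1 :: nat)" using \<open>q \<ge> 2\<close> by simp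
  then have "sigma (2 ^ (q - 1) * (2 ^ q - 1)) = (2 ^ q - 1) * 2 ^ q"
    using sigma_pow2_mult_odd sigma_prime[OF assms] q by simp
  also have "\<dots> = 2 * (2 ^ (q - 1) * (2 ^ q - 1))"
    using q by simp
  finally show ?thesis
    using prime_gt_1_nat[OF assms] unfolding perfect_def by simp
qed

lemma divisor_prod_square:
  fixes m :: nat
  assumes "m > 0"
  shows "divisor_prod m ^ 2 = m ^ card {d. d dvd m}"
proof -
  let ?D = "{d. d dvd m}"
  have "bij_betw (\<lambda>d. m div d) ?D ?D"
    by (rule bij_betw_byWitness[where f' = "\<lambda>d. m div d"])
       (use assms in \<open>auto simp: div_div_eq_right dvd_div_eq_mult\<close>)
  then have "(\<Prod>d\<in>?D. m div d) = divisor_prod m"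
    unfolding divisor_prod_def using prod.reindex_bij_betw[of _ ?D ?D "\<lambda>d. d"] by simp
  then have "divisor_prod m ^ 2 = (\<Prod>d\<in>?D. d) * (\<Prod>d\<in>?D. m div d)"
    unfolding divisor_prod_def by (simp add: power2_eq_square)
  also have "\<dots> = (\<Prod>d\<in>?D. m)"
    unfolding prod.distrib[symmetric] by (rule prod.cong) auto
  finally show ?thesis by simp
qed

lemma card_divisors_prime_square:
  fixes r :: nat
  assumes "prime r"
  shows "card {d. d dvd r ^ 2} = 3"
proof -
  have "{d. d dvd r ^ 2} = (\<lambda>i. r ^ i) ` {..2}"
    using divides_primepow_nat[OF assms] by auto
  moreover have "inj_on (\<lambda>i. r ^ i) {..2}"
    using prime_gt_1_nat[OF assms] by (auto intro: inj_onI simp: power_inject_exp)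
  ultimately show ?thesis by (simp add: card_image)
qed

lemma unitary_divisors_prime_power_mult_prime:
  fixes p r :: nat
  assumes "prime p" "prime r" "p \<noteq> r" "k \<ge> 1"
  shows "{d. d dvd p ^ k * r \<and> coprime d (p ^ k * r div d)} = {1, p ^ k, r, p ^ k * r}"
    (is "{d. d dvd ?N \<and> _} = _")
proof (intro set_eqI iffI)
  have "\<not> p dvd r" using assms primes_dvd_imp_eq by blast
  fix d assume "d \<in> {d. d dvd ?N \<and> coprime d (?N div d)}"
  then have "d dvd ?N" and cop: "coprime d (?N div d)" by auto
  then have "d \<in> (\<lambda>(i, e). p ^ i * e) ` ({..k} \<times> {e. e dvd r})"
    using divisors_prime_power_mult[OF assms(1) \<open>\<not> p dvd r\<close>] by blast
  then obtain i e where d: "d = p ^ i * e" "i \<le> k" "e dvd r" by auto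
  have e: "e = 1 \<or> e = r" using d(3) assms(2) by (auto simp: prime_nat_iff)
  show "d \<in> {1, p ^ k, r, ?N}"
  proof (cases "i = 0 \<or> i = k")
    case True
    with d e show ?thesis by auto
  next
    case False
    have "p ^ i * (e * (?N div d)) = ?N"
      using dvd_mult_div_cancel[OF \<open>d dvd ?N\<close>] d(1) by (simp add: mult.assoc)
    also have "\<dots> = p ^ i * (p ^ (k - i) * r)"
      using d(2) by (simp add: mult.assoc[symmetric] flip: power_add)
    finally have "e * (?N div d) = p ^ (k - i) * r" using assms(1) by simp
    moreover have "k - i > 0" using False d(2) by simp
    ultimately have "p dvd e * (?N div d)" by (simp add: dvd_power dvd_mult2)
    moreover have "\<not> p dvd e" using e \<open>\<not> p dvd r\<close> assms(1) by auto
    ultimately have "p dvd ?N div d" using assms(1) prime_dvd_mult_iff by blast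
    moreover have "p dvd d" using False d(1) by simp
    ultimately have "is_unit p" using cop coprime_common_divisor by blast
    with assms(1) show ?thesis by auto
  qed
next
  fix d assume "d \<in> {1, p ^ k, r, ?N}"
  moreover have "coprime (p ^ k) r"
    using assms primes_coprime by (simp add: coprime_power_left_iff)
  ultimately show "d \<in> {d. d dvd ?N \<and> coprime d (?N div d)}"
    using assms(1,2) by (auto simp: coprime_commute prime_gt_0_nat)
qed

lemma unitary_divisor_prod_prime_power_mult_prime:
  fixes p r :: nat
  assumes "prime p" "prime r" "p \<noteq> r" "k \<ge> 1"
  shows "unitary_divisor_prod (p ^ k * r) = (p ^ k * r) ^ 2"
proof -
  have pk: "p ^ k > 1" using prime_gt_1_nat[OF assms(1)] assms(4) by (intro one_less_power) auto
  moreover have r: "r > 1" using prime_gt_1_nat[OF assms(2)] .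
  moreover have "p ^ k \<noteq> r"
  proof
    assume "p ^ k = r"
    then have "p dvd r" using dvd_power[of k p] assms(4) by simp
    with assms(1-3) show False using primes_dvd_imp_eq by blast
  qed
  moreover have "p ^ k < p ^ k * r" by (rule n_less_n_mult_m) (use pk r in linarith)+
  moreover have "r < p ^ k * r" by (rule n_less_m_mult_n) (use pk r in linarith)+
  ultimately have "(\<Prod>d\<in>{1, p ^ k, r, p ^ k * r}. d) = p ^ k * r * (p ^ k * r)"
    by (simp add: mult.assoc)
  then show ?thesis
    unfolding unitary_divisor_prod_def unitary_divisors_prime_power_mult_prime[OF assms]
    by (simp add: power2_eq_square)
qed

theorem divisor_prod_unitary_divisor_prod_prime_power_mult_prime:
  fixes p r :: nat
  assumes "prime p" "prime r" "p \<noteq> r" "k \<ge> 1"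
  shows "divisor_prod (unitary_divisor_prod (p ^ k * r)) = (p ^ k * r) ^ (3 * (2 * k + 1))"
proof -
  let ?N = "p ^ k * r"
  have "\<not> p dvd r ^ 2" using assms primes_dvd_imp_eq prime_dvd_power by blast
  then have "card {d. d dvd ?N ^ 2} = 3 * (2 * k + 1)"
    using card_divisors_prime_power_mult[OF assms(1), of "r ^ 2" "2 * k"]
      card_divisors_prime_square[OF assms(2)]
    by (simp add: power_mult_distrib power_mult[symmetric] mult.commute)
  moreover have "?N > 0" using assms(1,2) by (simp add: prime_gt_0_nat)
  ultimately have "divisor_prod (?N ^ 2) ^ 2 = (?N ^ (3 * (2 * k + 1))) ^ 2"
    using divisor_prod_square[of "?N ^ 2"] by (simp flip: power_mult add: mult.commute)
  then show ?thesis
    unfolding unitary_divisor_prod_prime_power_mult_prime[OF assms]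
    by (rule power_eq_imp_eq_base) auto
qed

lemma divisor_prod_unitary_divisor_prod_Euclid_number:
  assumes "prime (2 ^ q - 1 :: nat)"
  shows "divisor_prod (unitary_divisor_prod (2 ^ (q - 1) * (2 ^ q - 1)))
           = (2 ^ (q - 1) * (2 ^ q - 1)) ^ (3 * (2 * q - 1))"
proof -
  have "q \<ge> 2" using Mersenne_prime_exponent_ge_2[OF assms] .
  then have "(4::nat) \<le> 2 ^ q" using power_increasing[of 2 q "2::nat"] by simp
  then have "(2::nat) \<noteq> 2 ^ q - 1" by linarith
  moreover have "q - 1 \<ge> 1" "2 * (q - 1) + 1 = 2 * q - 1" using \<open>q \<ge> 2\<close> by auto
  ultimately show ?thesis
    using divisor_prod_unitary_divisor_prod_prime_power_mult_prime[OF two_is_prime_nat assms]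
    by metis
qed

theorem mainTheorem14:
  fixes p :: nat
  assumes "prime p" and "prime (2 ^ p - 1 :: nat)"
  shows "\<forall>N::nat. (even N \<and> perfect N \<and> K_T0Tstar_perfect (3 * (2 * p - 1)) N)
           \<longleftrightarrow> N = 2 ^ (p - 1) * (2 ^ p - 1)"
proof (intro allI iffI)
  have "p \<ge> 2" using Mersenne_prime_exponent_ge_2[OF assms(2)] .
  fix N :: nat
  show "N = 2 ^ (p - 1) * (2 ^ p - 1)"
    if N: "even N \<and> perfect N \<and> K_T0Tstar_perfect (3 * (2 * p - 1)) N"
  proof -
    obtain q where q: "q \<ge> 2" "prime (2 ^ q - 1 :: nat)" "N = 2 ^ (q - 1) * (2 ^ q - 1)"
      using N even_perfect_imp_Euclid_form by blast
    with N divisor_prod_unitary_divisor_prod_Euclid_number[OF q(2)]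
    have "N ^ (3 * (2 * q - 1)) = N ^ (3 * (2 * p - 1))" "N > 1"
      unfolding K_T0Tstar_perfect_def by simp_all
    then have "q = p" using q(1) \<open>p \<ge> 2\<close> by (simp add: power_inject_exp)
    with q(3) show ?thesis by simp
  qed
  show "even N \<and> perfect N \<and> K_T0Tstar_perfect (3 * (2 * p - 1)) N"
    if N: "N = 2 ^ (p - 1) * (2 ^ p - 1)"
  proof -
    have "(2::nat) ^ (p - 1) > 1" using \<open>p \<ge> 2\<close> by (intro one_less_power) auto
    then have "N > 1" using N less_1_mult[OF _ prime_gt_1_nat[OF assms(2)]] by simp
    moreover have "even N" "3 * (2 * p - 1) \<ge> 2" using N \<open>p \<ge> 2\<close> by auto
    ultimately show ?thesis
      using N divisor_prod_unitary_divisor_prod_Euclid_number[OF assms(2)]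
        perfect_Euclid_number[OF assms(2)]
      unfolding K_T0Tstar_perfect_def by simp
  qed
qed

end
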